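(* Let $L$ be a language of algebras and $\mathfrak A$ an $L$-algebra with universe $A$. For all $a,d\in A$: $a:a\approx_{\mathfrak A}a:d$ holds if and only if $d=a$.
   Context: Let $L$ be a language of algebras: a set of function symbols, each with an arity in $\mathbb N$ (constants are 0-ary function symbols). Fix a countably infinite set $X$ of variables; $T_{L,X}$ is the set of $L$-terms over $X$, and $X(s)$ denotes the set of variables occurring in a term $s$. For an $L$-algebra $\mathfrak A$ with universe $A$, every term $s$ induces a function $s^{\mathfrak A}$, evaluated at assignments of elements of $A$ to variables. An arrow of $\mathfrak A$ is a pair $(a,b)\in A\times A$, written $a\to b$. The generalizations of an arrow $a\to b$ in $\mathfrak A$ are the pairs of arbitrary terms $s\to t$ with $s,t\in T_{L,X}$ such that there is an assignment $\sigma$ of elements of $A$ to the variables in $X(s)\cup X(t)$ with $s^{\mathfrak A}(\sigma)=a$ and $t^{\mathfrak A}(\sigma)=b$; their set is denoted $\uparrow_{\mathfrak A}(a\to b)$. For $L$-algebras $\mathfrak A,\mathfrak B$, an arrow $a\to b$ of $\mathfrak A$ and an arrow $c\to d$ of $\mathfrak B$, set $(a\to b)\uparrow_{(\mathfrak A,\mathfrak B)}(c\to d):=\uparrow_{\mathfrak A}(a\to b)\cap\uparrow_{\mathfrak B}(c\to d)$. A pair of terms $s\to t$ is trivial in $(\mathfrak A,\mathfrak B)$ if it belongs to $\uparrow_{\mathfrak A}(e)$ for every arrow $e$ of $\mathfrak A$ and to $\uparrow_{\mathfrak B}(e')$ for every arrow $e'$ of $\mathfrak B$. We write $a\to b\lesssim_{(\mathfrak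 A,\mathfrak B)}c\to d$ iff either (i) every element of $\uparrow_{\mathfrak A}(a\to b)\cup\uparrow_{\mathfrak B}(c\to d)$ is trivial in $(\mathfrak A,\mathfrak B)$, or (ii) $(a\to b)\uparrow_{(\mathfrak A,\mathfrak B)}(c\to d)$ contains an element not trivial in $(\mathfrak A,\mathfrak B)$ and, for every arrow $c'\to d'$ of $\mathfrak B$, the inclusion $(a\to b)\uparrow_{(\mathfrak A,\mathfrak B)}(c\to d)\subseteq(a\to b)\uparrow_{(\mathfrak A,\mathfrak B)}(c'\to d')$ implies equality of these two sets. Define $a\to b\approx_{(\mathfrak A,\mathfrak B)}c\to d$ iff $a\to b\lesssim_{(\mathfrak A,\mathfrak B)}c\to d$ and $c\to d\lesssim_{(\mathfrak B,\mathfrak A)}a\to b$. For $a,b\in A$ and $c,d\in B$, the similarity-based analogical proportion $a:b\approx_{(\mathfrak A,\mathfrak B)}c:d$ holds iff $a\to b\approx_{(\mathfrak A,\mathfrak B)}c\to d$ and $b\to a\approx_{(\mathfrak A,\mathfrak B)}d\to c$. We write $\approx_{\mathfrak A}$ for $\approx_{(\mathfrak A,\mathfrak A)}$. *)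

theory Defs
  imports Main
begin

text \<open>A language of algebras is given by an arity function ar on function symbols 'f
(constants have arity 0). Variables are natural numbers (a countably infinite set X).\<close>

datatype ('f, 'v) trm = Var 'v | Fun 'f "('f, 'v) trm list"

fun wf_term :: "('f \<Rightarrow> nat) \<Rightarrow> ('f, 'v) trm \<Rightarrow> bool" where
  "wf_term ar (Var x) = True"
| "wf_term ar (Fun f ts) = (length ts = ar f \<and> (\<forall>t\<in>set ts. wf_term ar t))"

fun vars :: "('f, 'v) trm \<Rightarrow> 'v set" where
  "vars (Var x) = {x}"
| "vars (Fun f ts) = (\<Union>t\<in>set ts. vars t)"

fun eval :: "('f \<Rightarrow> 'a list \<Rightarrow> 'a) \<Rightarrow> ('v \<Rightarrow> 'a) \<Rightarrow> ('f, 'v) trm \<Rightarrow> 'a" where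
  "eval I \<sigma> (Var x) = \<sigma> x"
| "eval I \<sigma> (Fun f ts) = I f (map (eval I \<sigma>) ts)"

definition is_algebra :: "('f \<Rightarrow> nat) \<Rightarrow> 'a set \<Rightarrow> ('f \<Rightarrow> 'a list \<Rightarrow> 'a) \<Rightarrow> bool" where
  "is_algebra ar A I \<longleftrightarrow>
     (\<forall>f xs. length xs = ar f \<and> set xs \<subseteq> A \<longrightarrow> I f xs \<in> A)"

definition gen :: "('f \<Rightarrow> nat) \<Rightarrow> 'a set \<Rightarrow> ('f \<Rightarrow> 'a list \<Rightarrow> 'a) \<Rightarrow> 'a \<Rightarrow> 'a
    \<Rightarrow> (('f, nat) trm \<times> ('f, nat) trm) set" where
  "gen ar A I a b = {(s, t). wf_term ar s \<and> wf_term ar t \<and>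
     (\<exists>\<sigma>. (\<forall>x\<in>vars s \<union> vars t. \<sigma> x \<in> A) \<and> eval I \<sigma> s = a \<and> eval I \<sigma> t = b)}"

definition joint_gen :: "('f \<Rightarrow> nat) \<Rightarrow> 'a set \<Rightarrow> ('f \<Rightarrow> 'a list \<Rightarrow> 'a)
    \<Rightarrow> 'b set \<Rightarrow> ('f \<Rightarrow> 'b list \<Rightarrow> 'b) \<Rightarrow> 'a \<Rightarrow> 'a \<Rightarrow> 'b \<Rightarrow> 'b
    \<Rightarrow> (('f, nat) trm \<times> ('f, nat) trm) set" where
  "joint_gen ar A I B J a b c d = gen ar A I a b \<inter> gen ar B J c d"

definition trivial_in :: "('f \<Rightarrow> nat) \<Rightarrow> 'a set \<Rightarrow> ('f \<Rightarrow> 'a list \<Rightarrow> 'a)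
    \<Rightarrow> 'b set \<Rightarrow> ('f \<Rightarrow> 'b list \<Rightarrow> 'b) \<Rightarrow> ('f, nat) trm \<times> ('f, nat) trm \<Rightarrow> bool" where
  "trivial_in ar A I B J st \<longleftrightarrow>
     (\<forall>a\<in>A. \<forall>b\<in>A. st \<in> gen ar A I a b) \<and> (\<forall>c\<in>B. \<forall>d\<in>B. st \<in> gen ar B J c d)"

definition arrow_le :: "('f \<Rightarrow> nat) \<Rightarrow> 'a set \<Rightarrow> ('f \<Rightarrow> 'a list \<Rightarrow> 'a)
    \<Rightarrow> 'b set \<Rightarrow> ('f \<Rightarrow> 'b list \<Rightarrow> 'b) \<Rightarrow> 'a \<Rightarrow> 'a \<Rightarrow> 'b \<Rightarrow> 'b \<Rightarrow> bool" where
  "arrow_le ar A I B J a b c d \<longleftrightarrow>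
     (\<forall>st \<in> gen ar A I a b \<union> gen ar B J c d. trivial_in ar A I B J st)
   \<or> ((\<exists>st \<in> joint_gen ar A I B J a b c d. \<not> trivial_in ar A I B J st)
      \<and> (\<forall>c'\<in>B. \<forall>d'\<in>B. joint_gen ar A I B J a b c d \<subseteq> joint_gen ar A I B J a b c' d'
            \<longrightarrow> joint_gen ar A I B J a b c d = joint_gen ar A I B J a b c' d'))"

definition arrow_approx :: "('f \<Rightarrow> nat) \<Rightarrow> 'a set \<Rightarrow> ('f \<Rightarrow> 'a list \<Rightarrow> 'a)
    \<Rightarrow> 'b set \<Rightarrow> ('f \<Rightarrow> 'b list \<Rightarrow> 'b) \<Rightarrow> 'a \<Rightarrow> 'a \<Rightarrow> 'b \<Rightarrow> 'b \<Rightarrow> bool" where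
  "arrow_approx ar A I B J a b c d \<longleftrightarrow>
     arrow_le ar A I B J a b c d \<and> arrow_le ar B J A I c d a b"

definition analogy :: "('f \<Rightarrow> nat) \<Rightarrow> 'a set \<Rightarrow> ('f \<Rightarrow> 'a list \<Rightarrow> 'a)
    \<Rightarrow> 'b set \<Rightarrow> ('f \<Rightarrow> 'b list \<Rightarrow> 'b) \<Rightarrow> 'a \<Rightarrow> 'a \<Rightarrow> 'b \<Rightarrow> 'b \<Rightarrow> bool" where
  "analogy ar A I B J a b c d \<longleftrightarrow>
     arrow_approx ar A I B J a b c d \<and> arrow_approx ar A I B J b a d c"

end

theory Submission
  imports Defs
begin

text \<open>The identity pair \<open>x \<rightarrow> x\<close> generalizes exactly the arrows \<open>e \<rightarrow> e\<close>. Hence if \<open>d \<noteq> a\<close>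
  it is a non-trivial generalization of \<open>a \<rightarrow> a\<close> lying outside \<open>\<up>(a \<rightarrow> d)\<close>, so the common
  generalizations of \<open>a \<rightarrow> a\<close> and \<open>a \<rightarrow> d\<close> form a proper subset of those of \<open>a \<rightarrow> a\<close> with
  itself, contradicting the maximality required by \<open>a \<rightarrow> a \<lesssim> a \<rightarrow> d\<close>. Conversely every arrow
  is \<open>\<lesssim>\<close>-related to itself.\<close>

lemma var_pair_in_gen_iff: "(Var x, Var x) \<in> gen ar A I a b \<longleftrightarrow> a = b \<and> a \<in> A"
  unfolding gen_def by auto

lemma joint_gen_same: "joint_gen ar A I A I a b a b = gen ar A I a b"
  unfolding joint_gen_def by simp

lemma var_pair_not_trivial:
  assumes "a \<in> A" and "d \<in> A" and "d \<noteq> a"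
  shows "\<not> trivial_in ar A I B J (Var x, Var x)"
  using assms by (auto simp: trivial_in_def var_pair_in_gen_iff)

lemma arrow_le_refl: "arrow_le ar A I A I a b a b"
  unfolding arrow_le_def joint_gen_def by blast

lemma analogy_refl: "analogy ar A I A I a b a b"
  unfolding analogy_def arrow_approx_def by (intro conjI arrow_le_refl)

lemma arrow_le_identity_imp_eq:
  assumes le: "arrow_le ar A I A I a a a d" and "a \<in> A" and "d \<in> A"
  shows "d = a"
proof (rule ccontr)
  assume "d \<noteq> a"
  let ?id = "(Var 0, Var 0) :: ('f, nat) trm \<times> ('f, nat) trm"
  have id_aa: "?id \<in> gen ar A I a a" and id_ad: "?id \<notin> gen ar A I a d"
    using \<open>a \<in> A\<close> \<open>d \<noteq> a\<close> by (simp_all add: var_pair_in_gen_iff)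
  have nontrivial: "\<not> trivial_in ar A I A I ?id"
    using \<open>a \<in> A\<close> \<open>d \<in> A\<close> \<open>d \<noteq> a\<close> by (rule var_pair_not_trivial)
  have "\<not> (\<forall>st \<in> gen ar A I a a \<union> gen ar A I a d. trivial_in ar A I A I st)"
    using id_aa nontrivial by blast
  with le have "\<forall>c'\<in>A. \<forall>d'\<in>A. joint_gen ar A I A I a a a d \<subseteq> joint_gen ar A I A I a a c' d'
      \<longrightarrow> joint_gen ar A I A I a a a d = joint_gen ar A I A I a a c' d'"
    unfolding arrow_le_def by blast
  then have "joint_gen ar A I A I a a a d \<subseteq> joint_gen ar A I A I a a a a
      \<longrightarrow> joint_gen ar A I A I a a a d = joint_gen ar A I A I a a a a"
    using \<open>a \<in> A\<close> by blast
  moreover have "joint_gen ar A I A I a a a d \<subseteq> gen ar A I a a"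
    unfolding joint_gen_def by blast
  ultimately have "joint_gen ar A I A I a a a d = gen ar A I a a"
    unfolding joint_gen_same by blast
  with id_aa id_ad show False
    unfolding joint_gen_def by blast
qed

theorem theorem3:
  fixes ar :: "'f \<Rightarrow> nat" and A :: "'a set" and I :: "'f \<Rightarrow> 'a list \<Rightarrow> 'a"
  assumes "is_algebra ar A I" and "a \<in> A" and "d \<in> A"
  shows "analogy ar A I A I a a a d \<longleftrightarrow> d = a"
proof
  assume "analogy ar A I A I a a a d"
  then have "arrow_le ar A I A I a a a d"
    unfolding analogy_def arrow_approx_def by blast
  then show "d = a"
    using \<open>a \<in> A\<close> \<open>d \<in> A\<close> by (rule arrow_le_identity_imp_eq)
next
  assume "d = a"
  then show "analogy ar A I A I a a a d"
    using analogy_refl by metis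
qed

end
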